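(* Let $\mathcal{H}$ be a separable Hilbert space, $\{\mathcal{H}_j\}_{j\in J}$ ($J\subseteq\mathbb{Z}$) a sequence of closed subspaces of $\mathcal{H}$, and $K\in\mathcal{B}(\mathcal{H})$ with closed range $\mathcal{R}(K)$. Let $\{\Lambda_j\}_{j\in J}$ and $\{\Theta_j\}_{j\in J}$ be $g$-Bessel sequences with $\Lambda_j,\Theta_j\in\mathcal{B}(\mathcal{H},\mathcal{H}_j)$, and let $U:\mathcal{R}(K)\to\mathcal{R}(K)$, $Uf=\sum_{j\in J}\Lambda_j^{\ast}\Theta_jf$, satisfy $\|I_{\mathcal{R}(K)}-U\|<1$ (i.e. $\{\Theta_j\}$ is an approximate $K$-$g$-dual of $\{\Lambda_j\}$). Then $U$ is invertible on $\mathcal{R}(K)$, and $\{\Theta_jU^{-1}\}_{j\in J}$ (operators $\mathcal{R}(K)\to\mathcal{H}_j$) is a $K$-$g$-dual of $\{\Lambda_j\}_{j\in J}$, i.e. it is a $g$-Bessel sequence on $\mathcal{R}(K)$ and $\sum_{j\in J}\Lambda_j^{\ast}\Theta_jU^{-1}f=f$ for all $f\in\mathcal{R}(K)$.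
   Context: A sequence $\{\Lambda_j\in\mathcal{B}(\mathcal{H},\mathcal{H}_j)\}_{j\in J}$ is $g$-Bessel if there is $B>0$ with $\sum_{j\in J}\|\Lambda_jf\|^2\leq B\|f\|^2$ for all $f\in\mathcal{H}$; $T_\Lambda:\{g_j\}\mapsto\sum_j\Lambda_j^\ast g_j$ denotes its synthesis operator, so $U=T_\Lambda T_\Theta^\ast$ restricted to $\mathcal{R}(K)$. The sequences are called approximately dual $K$-$g$-frames if $\|I_{\mathcal{R}(K)}-T_\Lambda T_\Theta^\ast\|<1$, where $T_\Lambda T_\Theta^\ast$ is regarded as an operator on $\mathcal{R}(K)$. *)

theory Defs
  imports "HOL-Analysis.Analysis"
begin

definition complex_hilbert ::
  "(complex \<Rightarrow> 'a::{real_normed_vector,complete_space} \<Rightarrow> 'a) \<Rightarrow> ('a \<Rightarrow> 'a \<Rightarrow> complex) \<Rightarrow> bool" where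
  "complex_hilbert cs ip \<longleftrightarrow>
     (\<forall>r x. cs (complex_of_real r) x = r *\<^sub>R x) \<and>
     (\<forall>a b x. cs (a * b) x = cs a (cs b x)) \<and>
     (\<forall>a x y. cs a (x + y) = cs a x + cs a y) \<and>
     (\<forall>a b x. cs (a + b) x = cs a x + cs b x) \<and>
     (\<forall>x y z. ip (x + y) z = ip x z + ip y z) \<and>
     (\<forall>a x y. ip (cs a x) y = a * ip x y) \<and>
     (\<forall>x y. ip y x = cnj (ip x y)) \<and>
     (\<forall>x. ip x x = complex_of_real ((norm x)\<^sup>2))"

definition cblin :: "(complex \<Rightarrow> 'a::real_normed_vector \<Rightarrow> 'a) \<Rightarrow> ('a \<Rightarrow> 'a) \<Rightarrow> bool" where
  "cblin cs L \<longleftrightarrow> bounded_linear L \<and> (\<forall>a x. L (cs a x) = cs a (L x))"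

definition closed_csubspace :: "(complex \<Rightarrow> 'a::real_normed_vector \<Rightarrow> 'a) \<Rightarrow> 'a set \<Rightarrow> bool" where
  "closed_csubspace cs S \<longleftrightarrow> closed S \<and> 0 \<in> S \<and> (\<forall>x\<in>S. \<forall>y\<in>S. x + y \<in> S) \<and>
     (\<forall>a. \<forall>x\<in>S. cs a x \<in> S)"

definition adj :: "('a \<Rightarrow> 'a \<Rightarrow> complex) \<Rightarrow> ('a \<Rightarrow> 'a) \<Rightarrow> 'a \<Rightarrow> 'a" where
  "adj ip L g = (THE h. \<forall>f. ip (L f) g = ip f h)"

definition g_bessel_on :: "'a::real_normed_vector set \<Rightarrow> 'i set \<Rightarrow> ('i \<Rightarrow> 'a \<Rightarrow> 'a) \<Rightarrow> bool" where
  "g_bessel_on S J L \<longleftrightarrow> (\<exists>B>0. \<forall>f\<in>S.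
      (\<lambda>j. (norm (L j f))\<^sup>2) summable_on J \<and> (\<Sum>\<^sub>\<infinity>j\<in>J. (norm (L j f))\<^sup>2) \<le> B * (norm f)\<^sup>2)"

definition opnorm_on_less :: "'a::real_normed_vector set \<Rightarrow> ('a \<Rightarrow> 'a) \<Rightarrow> real \<Rightarrow> bool" where
  "opnorm_on_less S T r \<longleftrightarrow> (\<exists>c<r. \<forall>f\<in>S. norm (T f) \<le> c * norm f)"

end

(*
  On the closed subspace R(K) the operator U satisfies |f - U f| <= c |f| with c < 1. Hence
  |U f| >= (1 - c) |f|, so U is injective with an inverse bounded by 1 / (1 - c), and U g = f is
  solved by the Banach fixed point theorem applied to g \<mapsto> f + (g - U g). This needs U to be
  additive and to commute with complex scalars, which follows from the same properties of the
  adjoints Lambda_j^*; their existence is the Riesz representation theorem, obtained from nearest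
  points in closed subspaces since the space is only given through its inner product.
  Composing the g-Bessel sequence Theta_j with the bounded map U^-1 gives a g-Bessel sequence,
  and sum_j Lambda_j^* Theta_j U^-1 f = U U^-1 f = f.
*)

theory Submission
  imports Defs
begin

section \<open>Perturbations of the identity\<close>

definition clinear_on :: "(complex \<Rightarrow> 'a::real_normed_vector \<Rightarrow> 'a) \<Rightarrow> 'a set \<Rightarrow> ('a \<Rightarrow> 'a) \<Rightarrow> bool"
  where "clinear_on cs S U \<longleftrightarrow>
    (\<forall>f\<in>S. \<forall>g\<in>S. U (f + g) = U f + U g) \<and> (\<forall>a. \<forall>f\<in>S. U (cs a f) = cs a (U f))"

lemma cblin_range_closed_csubspace:
  assumes "cblin cs K" "closed (range K)"
  shows "closed_csubspace cs (range K)"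
proof -
  interpret K: bounded_linear K
    using assms(1) by (simp add: cblin_def)
  have "0 \<in> range K"
    by (metis K.zero rangeI)
  moreover have "K x + K y \<in> range K" for x y
    by (metis K.add rangeI)
  moreover have "cs a (K x) \<in> range K" for a x
    using assms(1) by (metis cblin_def rangeI)
  ultimately show ?thesis
    using assms(2) unfolding closed_csubspace_def by auto
qed

lemma near_identity_lower_bound:
  fixes f g :: "'a::real_normed_vector"
  assumes "norm (f - g) \<le> c * norm f"
  shows "(1 - c) * norm f \<le> norm g"
  using norm_triangle_ineq[of "f - g" g] assms by (simp add: algebra_simps)

text \<open>An unconditional sum that does not exist is 0 by convention, which cannot happen for
  U f with f \<noteq> 0.\<close>
lemma near_identity_has_sum:
  fixes U :: "'a::real_normed_vector \<Rightarrow> 'a"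
  assumes "U f = (\<Sum>\<^sub>\<infinity>j\<in>J. T j f)" "norm (f - U f) \<le> c * norm f" "c < 1"
    and "\<And>j. j \<in> J \<Longrightarrow> T j 0 = 0"
  shows "((\<lambda>j. T j f) has_sum U f) J"
proof (cases "f = 0")
  case True
  then have "((\<lambda>j. T j f) has_sum 0) J"
    using assms(4) by (subst has_sum_cong[where g = "\<lambda>_. 0"]) (simp_all add: has_sum_0)
  moreover from this have "U f = 0"
    using assms(1) infsumI by metis
  ultimately show ?thesis
    by simp
next
  case False
  then have "U f \<noteq> 0"
    using near_identity_lower_bound[OF assms(2)] \<open>c < 1\<close> by (auto simp: mult_le_0_iff)
  then show ?thesis
    using assms(1) infsum_not_exists has_sum_infsum by metis
qed

text \<open>U g = f exactly when g is a fixed point of the contraction g \<mapsto> f + (g - U g).\<close>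
lemma near_identity_bij_betw:
  fixes U :: "'a::real_normed_vector \<Rightarrow> 'a"
  assumes "complete R" "subspace R" "U ` R \<subseteq> R"
    and add: "\<And>f g. f \<in> R \<Longrightarrow> g \<in> R \<Longrightarrow> U (f + g) = U f + U g"
    and "c < 1" and near: "\<And>f. f \<in> R \<Longrightarrow> norm (f - U f) \<le> c * norm f"
  shows "bij_betw U R R"
proof -
  have diff: "f - g \<in> R" if "f \<in> R" "g \<in> R" for f g
    using that subspace_diff[OF \<open>subspace R\<close>] by blast
  have U_diff: "U (f - g) = U f - U g" if "f \<in> R" "g \<in> R" for f g
    using add[of "f - g" g] that diff by (simp add: eq_diff_eq)
  have "inj_on U R"
  proof (rule inj_onI)
    fix f g
    assume "f \<in> R" "g \<in> R" "U f = U g"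
    then have "(1 - c) * norm (f - g) \<le> 0"
      using near_identity_lower_bound[OF near[of "f - g"]] diff U_diff by simp
    then show "f = g"
      using \<open>c < 1\<close> by (simp add: mult_le_0_iff)
  qed
  moreover have "f \<in> U ` R" if "f \<in> R" for f
  proof -
    have "\<exists>!g\<in>R. f + (g - U g) = g"
    proof (rule Banach_fix[OF \<open>complete R\<close>])
      show "R \<noteq> {}" "0 \<le> max c 0" "max c 0 < 1"
        using \<open>subspace R\<close> \<open>c < 1\<close> subspace_0 by auto
      show "(\<lambda>g. f + (g - U g)) ` R \<subseteq> R"
        using \<open>f \<in> R\<close> \<open>U ` R \<subseteq> R\<close> \<open>subspace R\<close> by (auto intro: subspace_add subspace_diff)
      fix x y
      assume "x \<in> R" "y \<in> R"
      then have "dist (f + (x - U x)) (f + (y - U y)) = norm ((x - y) - U (x - y))"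
        by (simp add: dist_norm U_diff[OF \<open>x \<in> R\<close> \<open>y \<in> R\<close>] algebra_simps)
      also have "\<dots> \<le> c * norm (x - y)"
        using near diff \<open>x \<in> R\<close> \<open>y \<in> R\<close> by blast
      also have "\<dots> \<le> max c 0 * dist x y"
        by (simp add: dist_norm mult_right_mono)
      finally show "dist (f + (x - U x)) (f + (y - U y)) \<le> max c 0 * dist x y" .
    qed
    then obtain g where "g \<in> R" "f + (g - U g) = g"
      by blast
    then show ?thesis
      by (intro image_eqI[of _ U g]) (simp_all add: algebra_simps)
  qed
  ultimately show ?thesis
    using \<open>U ` R \<subseteq> R\<close> by (auto simp: bij_betw_def)
qed

lemma clinear_on_inv_into:
  assumes "bij_betw U R R" "closed_csubspace cs R" "clinear_on cs R U"
  shows "clinear_on cs R (inv_into R U)"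
proof -
  have inj: "inj_on U R" and surj: "U ` R = R"
    using assms(1) by (auto simp: bij_betw_def)
  have inv: "inv_into R U f \<in> R" "U (inv_into R U f) = f" if "f \<in> R" for f
    using that surj inv_into_into f_inv_into_f by metis+
  show ?thesis
    unfolding clinear_on_def
  proof (intro conjI ballI allI)
    fix f g a
    assume "f \<in> R" "g \<in> R"
    then show "inv_into R U (f + g) = inv_into R U f + inv_into R U g"
      using assms(2,3) inv[of f] inv[of g]
      by (intro inv_into_f_eq[OF inj]) (auto simp: closed_csubspace_def clinear_on_def)
  next
    fix f a
    assume "f \<in> R"
    then show "inv_into R U (cs a f) = cs a (inv_into R U f)"
      using assms(2,3) inv[of f]
      by (intro inv_into_f_eq[OF inj]) (auto simp: closed_csubspace_def clinear_on_def)
  qed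
qed

lemma near_identity_inv_into_bound:
  fixes U :: "'a::real_normed_vector \<Rightarrow> 'a"
  assumes "bij_betw U R R" "c < 1" "\<And>f. f \<in> R \<Longrightarrow> norm (f - U f) \<le> c * norm f" "f \<in> R"
  shows "norm (inv_into R U f) \<le> 1 / (1 - c) * norm f"
proof -
  have "inv_into R U f \<in> R" "U (inv_into R U f) = f"
    using assms(1,4) bij_betw_imp_surj_on inv_into_into f_inv_into_f by metis+
  then have "(1 - c) * norm (inv_into R U f) \<le> norm f"
    using near_identity_lower_bound[OF assms(3)[OF \<open>inv_into R U f \<in> R\<close>]] by simp
  then show ?thesis
    using \<open>c < 1\<close> by (simp add: field_simps)
qed

lemma g_bessel_on_compose:
  assumes "g_bessel_on T J L" "V ` S \<subseteq> T" and bound: "\<And>f. f \<in> S \<Longrightarrow> norm (V f) \<le> C * norm f"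
  shows "g_bessel_on S J (\<lambda>j f. L j (V f))"
proof -
  obtain B where "B > 0" and B: "\<And>f. f \<in> T \<Longrightarrow> (\<lambda>j. (norm (L j f))\<^sup>2) summable_on J \<and>
      (\<Sum>\<^sub>\<infinity>j\<in>J. (norm (L j f))\<^sup>2) \<le> B * (norm f)\<^sup>2"
    using assms(1) unfolding g_bessel_on_def by blast
  have bound_sq: "B * (norm (V f))\<^sup>2 \<le> B * (C\<^sup>2 + 1) * (norm f)\<^sup>2" if "f \<in> S" for f
  proof -
    have "(norm (V f))\<^sup>2 \<le> (C * norm f)\<^sup>2"
      using bound[OF that] by (simp add: power_mono)
    also have "\<dots> \<le> (C\<^sup>2 + 1) * (norm f)\<^sup>2"
      by (simp add: power_mult_distrib mult_right_mono)
    finally show ?thesis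
      using \<open>B > 0\<close> by simp
  qed
  show ?thesis
    unfolding g_bessel_on_def
  proof (intro exI[of _ "B * (C\<^sup>2 + 1)"] conjI ballI)
    show "0 < B * (C\<^sup>2 + 1)"
      using \<open>B > 0\<close> by (simp add: add_nonneg_pos)
    fix f
    assume "f \<in> S"
    then have "V f \<in> T"
      using assms(2) by blast
    then show "(\<lambda>j. (norm (L j (V f)))\<^sup>2) summable_on J"
      using B by blast
    show "(\<Sum>\<^sub>\<infinity>j\<in>J. (norm (L j (V f)))\<^sup>2) \<le> B * (C\<^sup>2 + 1) * (norm f)\<^sup>2"
      using B[OF \<open>V f \<in> T\<close>] bound_sq[OF \<open>f \<in> S\<close>] by linarith
  qed
qed

locale complex_hilbert_space =
  fixes cs :: "complex \<Rightarrow> 'a::{real_normed_vector,complete_space} \<Rightarrow> 'a"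
    and ip :: "'a \<Rightarrow> 'a \<Rightarrow> complex"
  assumes complex_hilbert: "complex_hilbert cs ip"
begin

lemma cs_of_real: "cs (complex_of_real r) x = r *\<^sub>R x"
  and cs_mult: "cs (a * b) x = cs a (cs b x)"
  and cs_add_right: "cs a (x + y) = cs a x + cs a y"
  and ip_add_left: "ip (x + y) z = ip x z + ip y z"
  and ip_cs_left: "ip (cs a x) y = a * ip x y"
  and ip_conj_commute: "ip y x = cnj (ip x y)"
  and ip_self: "ip x x = complex_of_real ((norm x)\<^sup>2)"
  using complex_hilbert unfolding complex_hilbert_def by blast+

lemma ip_add_right: "ip x (y + z) = ip x y + ip x z"
  by (metis ip_conj_commute ip_add_left complex_cnj_add)

lemma ip_cs_right: "ip x (cs a y) = cnj a * ip x y"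
  by (metis ip_conj_commute ip_cs_left complex_cnj_mult)

lemma ip_scaleR_left: "ip (r *\<^sub>R x) y = r * ip x y"
  by (metis cs_of_real ip_cs_left)

lemma ip_scaleR_right: "ip x (r *\<^sub>R y) = r * ip x y"
  by (metis cs_of_real ip_cs_right complex_cnj_complex_of_real)

lemma ip_diff_right: "ip x (y - z) = ip x y - ip x z"
  using ip_add_right[of x "y - z" z] by simp

lemma ip_zero_right [simp]: "ip x 0 = 0"
  using ip_diff_right[of x 0 0] by simp

lemma Re_ip_commute: "Re (ip y x) = Re (ip x y)"
  by (subst ip_conj_commute) simp

lemma Re_ip_self: "Re (ip x x) = (norm x)\<^sup>2"
  by (simp add: ip_self)

lemma ip_self_eq_0_iff: "ip x x = 0 \<longleftrightarrow> x = 0"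
  by (simp add: ip_self)

lemma norm_add_square: "(norm (x + y))\<^sup>2 = (norm x)\<^sup>2 + 2 * Re (ip x y) + (norm y)\<^sup>2"
proof -
  have "(norm (x + y))\<^sup>2 = Re (ip x x) + Re (ip x y) + Re (ip y x) + Re (ip y y)"
    by (simp flip: Re_ip_self add: ip_add_left ip_add_right)
  then show ?thesis
    by (simp add: Re_ip_self Re_ip_commute[of x y])
qed

lemma norm_diff_square: "(norm (x - y))\<^sup>2 = (norm x)\<^sup>2 - 2 * Re (ip x y) + (norm y)\<^sup>2"
  using norm_add_square[of x "- y"] ip_scaleR_right[of x "-1" y] by simp

lemma parallelogram_law:
  "(norm (x + y))\<^sup>2 + (norm (x - y))\<^sup>2 = 2 * (norm x)\<^sup>2 + 2 * (norm (y::'a))\<^sup>2"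
  using norm_add_square[of x y] norm_diff_square[of x y] by linarith

lemma cs_scaleR: "cs a (r *\<^sub>R x) = r *\<^sub>R cs a x"
  by (metis cs_of_real cs_mult mult.commute)

lemma norm_cs: "norm (cs a x) = cmod a * norm x"
proof -
  have "complex_of_real ((norm (cs a x))\<^sup>2) = ip (cs a x) (cs a x)"
    by (simp only: ip_self)
  also have "\<dots> = a * cnj a * ip x x"
    by (simp add: ip_cs_left ip_cs_right)
  also have "\<dots> = complex_of_real ((cmod a * norm x)\<^sup>2)"
    by (simp add: ip_self complex_norm_square[symmetric] power_mult_distrib)
  finally have "(norm (cs a x))\<^sup>2 = (cmod a * norm x)\<^sup>2"
    using of_real_eq_iff by blast
  then show ?thesis
    by (simp add: power2_eq_iff_nonneg)
qed

lemma bounded_linear_cs: "bounded_linear (cs a)"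
  by (rule bounded_linear_intro[where K = "cmod a"])
    (auto simp: cs_add_right cs_scaleR norm_cs mult.commute)

lemma closed_csubspace_imp_subspace: "closed_csubspace cs S \<Longrightarrow> subspace S"
  unfolding closed_csubspace_def subspace_def by (metis cs_of_real)

subsection \<open>Nearest points and the Riesz representation\<close>

lemma minimizing_sequence_Cauchy:
  fixes z :: 'a
  assumes "convex S" and n: "\<And>k. n k \<in> S" and d: "\<And>x. x \<in> S \<Longrightarrow> d \<le> norm (z - x)"
    and lim: "(\<lambda>k. norm (z - n k)) \<longlonglongrightarrow> d"
  shows "Cauchy n"
proof (rule CauchyI)
  fix e :: real
  assume "0 < e"
  have "0 \<le> d"
    by (rule LIMSEQ_le_const[OF lim]) simp
  define g where "g k = (norm (z - n k))\<^sup>2 - d\<^sup>2" for k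
  have gap: "(norm (n k - n m))\<^sup>2 \<le> 2 * g k + 2 * g m" for k m
  proof -
    have "(1/2) *\<^sub>R n k + (1/2) *\<^sub>R n m \<in> S"
      using convexD[OF \<open>convex S\<close> n n] by simp
    moreover have "z - ((1/2) *\<^sub>R n k + (1/2) *\<^sub>R n m) = (1/2) *\<^sub>R ((z - n k) + (z - n m))"
      by (simp add: algebra_simps flip: scaleR_add_left)
    ultimately have "2 * d \<le> norm ((z - n k) + (z - n m))"
      using d by fastforce
    then have "4 * d\<^sup>2 \<le> (norm ((z - n k) + (z - n m)))\<^sup>2"
      using \<open>0 \<le> d\<close> power_mono[of "2 * d" _ 2] by (simp add: power_mult_distrib)
    moreover have "(z - n k) - (z - n m) = n m - n k"
      by simp
    ultimately show ?thesis
      using parallelogram_law[of "z - n k" "z - n m"] by (simp add: g_def norm_minus_commute)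
  qed
  have "g \<longlonglongrightarrow> 0"
    unfolding g_def using tendsto_diff[OF tendsto_power[OF lim, of 2] tendsto_const[of "d\<^sup>2"]] by simp
  then have "\<forall>\<^sub>F k in sequentially. g k < e\<^sup>2 / 4"
    using \<open>0 < e\<close> by (intro order_tendstoD(2)) auto
  then obtain M where M: "\<And>k. k \<ge> M \<Longrightarrow> g k < e\<^sup>2 / 4"
    unfolding eventually_sequentially by blast
  show "\<exists>M. \<forall>m\<ge>M. \<forall>k\<ge>M. norm (n m - n k) < e"
  proof (intro exI allI impI)
    fix m k
    assume "M \<le> m" "M \<le> k"
    then have "(norm (n m - n k))\<^sup>2 < e\<^sup>2"
      using gap[of m k] M[of m] M[of k] by linarith
    then show "norm (n m - n k) < e"
      using \<open>0 < e\<close> by (simp add: power_less_imp_less_base)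
  qed
qed

lemma nearest_point_exists:
  fixes z :: 'a
  assumes "closed S" "convex S" "S \<noteq> {}"
  shows "\<exists>p\<in>S. \<forall>x\<in>S. norm (z - p) \<le> norm (z - x)"
proof -
  define d where "d = infdist z S"
  have d: "d \<le> norm (z - x)" if "x \<in> S" for x
    using infdist_le[OF that, of z] by (simp add: d_def dist_norm)
  have "bdd_below ((\<lambda>x. dist z x) ` S)"
    by (rule bdd_belowI[where m = 0]) auto
  then have "\<exists>x\<in>S. norm (z - x) < d + 1 / real (Suc k)" for k
    using cINF_less_iff[of S "\<lambda>x. dist z x" "d + 1 / real (Suc k)"] \<open>S \<noteq> {}\<close>
    by (simp add: d_def infdist_notempty dist_norm)
  then obtain n where n: "\<And>k. n k \<in> S" "\<And>k. norm (z - n k) < d + 1 / real (Suc k)"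
    by metis
  have lim: "(\<lambda>k. norm (z - n k)) \<longlonglongrightarrow> d"
  proof (rule real_tendsto_sandwich)
    show "\<forall>\<^sub>F k in sequentially. d \<le> norm (z - n k)"
      using d n(1) by simp
    show "\<forall>\<^sub>F k in sequentially. norm (z - n k) \<le> d + 1 / real (Suc k)"
      using n(2) by (auto intro: always_eventually less_imp_le)
    show "(\<lambda>k. d + 1 / real (Suc k)) \<longlonglongrightarrow> d"
      using tendsto_add[OF tendsto_const LIMSEQ_inverse_real_of_nat, of d]
      by (simp add: divide_inverse)
  qed simp
  obtain p where p: "n \<longlonglongrightarrow> p"
    using minimizing_sequence_Cauchy[OF \<open>convex S\<close> n(1) d lim] convergent_eq_Cauchy by blast
  have "p \<in> S"
    using \<open>closed S\<close> n(1) p closed_sequentially by blast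
  moreover have "norm (z - p) = d"
    using LIMSEQ_unique[OF tendsto_norm[OF tendsto_diff[OF tendsto_const p]] lim] .
  ultimately show ?thesis
    using d by auto
qed

lemma nearest_point_orthogonal:
  fixes z :: 'a
  assumes "subspace N" "p \<in> N" and nearest: "\<And>y. y \<in> N \<Longrightarrow> norm (z - p) \<le> norm (z - y)"
    and "x \<in> N"
  shows "Re (ip (z - p) x) = 0"
proof (cases "x = 0")
  case False
  define a where "a = Re (ip (z - p) x)"
  define b where "b = (norm x)\<^sup>2"
  define t where "t = a / b"
  have "0 < b"
    using False by (simp add: b_def)
  have "p + t *\<^sub>R x \<in> N"
    using assms by (simp add: subspace_add subspace_scale)
  then have "norm (z - p) \<le> norm ((z - p) - t *\<^sub>R x)"
    using nearest by (simp add: algebra_simps)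
  then have "(norm (z - p))\<^sup>2 \<le> (norm ((z - p) - t *\<^sub>R x))\<^sup>2"
    by (simp add: power_mono)
  also have "\<dots> = (norm (z - p))\<^sup>2 - 2 * t * a + t\<^sup>2 * b"
    unfolding a_def b_def by (simp add: norm_diff_square ip_scaleR_right power_mult_distrib)
  also have "\<dots> = (norm (z - p))\<^sup>2 - a\<^sup>2 / b"
    using \<open>0 < b\<close> by (simp add: t_def power2_eq_square field_simps)
  finally have "a\<^sup>2 / b \<le> 0"
    by simp
  then show ?thesis
    using \<open>0 < b\<close> by (simp add: a_def divide_le_0_iff)
qed simp

text \<open>The representing vector is a multiple of the component orthogonal to the kernel N of
  a vector outside N.\<close>
lemma riesz_representation_real:
  fixes \<psi> :: "'a \<Rightarrow> real"
  assumes "linear \<psi>" "continuous_on UNIV \<psi>"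
  shows "\<exists>h. \<forall>f. \<psi> f = Re (ip f h)"
proof (cases "\<forall>f. \<psi> f = 0")
  case True
  then show ?thesis
    by (intro exI[of _ 0]) simp
next
  case False
  then obtain z where "\<psi> z \<noteq> 0"
    by blast
  define N where "N = {x. \<psi> x = 0}"
  have "subspace N" "convex N"
    using linear_subspace_kernel[OF \<open>linear \<psi>\<close>] subspace_imp_convex by (auto simp: N_def)
  moreover have "closed N"
    unfolding N_def using \<open>continuous_on UNIV \<psi>\<close> by (rule closed_Collect_eq) simp
  moreover have "0 \<in> N"
    using \<open>linear \<psi>\<close> by (simp add: N_def linear_0)
  ultimately obtain p where "p \<in> N" and p: "\<And>x. x \<in> N \<Longrightarrow> norm (z - p) \<le> norm (z - x)"
    using nearest_point_exists[of N z] by blast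
  define w where "w = z - p"
  have "\<psi> w \<noteq> 0"
    using \<open>\<psi> z \<noteq> 0\<close> \<open>p \<in> N\<close> \<open>linear \<psi>\<close> by (simp add: w_def N_def linear_diff)
  then have "w \<noteq> 0"
    using \<open>linear \<psi>\<close> linear_0 by blast
  show ?thesis
  proof (intro exI allI)
    fix f
    define s where "s = \<psi> f / \<psi> w"
    have "f - s *\<^sub>R w \<in> N"
      using \<open>\<psi> w \<noteq> 0\<close> \<open>linear \<psi>\<close> by (simp add: N_def s_def linear_diff linear_scale)
    then have "Re (ip w (f - s *\<^sub>R w)) = 0"
      using nearest_point_orthogonal[OF \<open>subspace N\<close> \<open>p \<in> N\<close> p] by (simp add: w_def)
    then have "Re (ip f w) = s * (norm w)\<^sup>2"
      by (simp add: ip_diff_right ip_scaleR_right Re_ip_commute[of w f] Re_ip_self)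
    then show "\<psi> f = Re (ip f ((\<psi> w / (norm w)\<^sup>2) *\<^sub>R w))"
      using \<open>w \<noteq> 0\<close> \<open>\<psi> w \<noteq> 0\<close> by (simp add: ip_scaleR_right s_def field_simps)
  qed
qed

text \<open>The real part of the functional is continuous by polarization; since L commutes with
  multiplication by \<i>, the representing vector of the real part represents the complex one.\<close>
lemma adj_exists:
  assumes "cblin cs L"
  shows "\<exists>h. \<forall>f. ip (L f) y = ip f h"
proof -
  interpret L: bounded_linear L
    using assms by (simp add: cblin_def)
  define \<psi> where "\<psi> f = Re (ip (L f) y)" for f
  have "linear \<psi>"
    by (rule linearI) (simp_all add: \<psi>_def L.add L.scaleR ip_add_left ip_scaleR_left)
  moreover have "\<psi> = (\<lambda>f. (norm (L f + y))\<^sup>2 / 4 - (norm (L f - y))\<^sup>2 / 4)"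
    by (rule ext) (simp add: \<psi>_def norm_add_square norm_diff_square add_divide_distrib diff_divide_distrib)
  then have "continuous_on UNIV \<psi>"
    by (auto intro!: continuous_intros L.continuous_on)
  ultimately obtain h where h: "\<And>f. \<psi> f = Re (ip f h)"
    using riesz_representation_real by blast
  show ?thesis
  proof (intro exI allI complex_eqI)
    fix f
    show "Re (ip (L f) y) = Re (ip f h)"
      using h[of f] by (simp add: \<psi>_def)
    have "Re (ip (L (cs \<i> f)) y) = Re (ip (cs \<i> f) h)"
      using h[of "cs \<i> f"] by (simp add: \<psi>_def)
    then show "Im (ip (L f) y) = Im (ip f h)"
      using assms by (simp add: cblin_def ip_cs_left)
  qed
qed

lemma adj_eqI:
  assumes "\<And>f. ip (L f) y = ip f h"
  shows "adj ip L y = h"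
  unfolding adj_def
proof (rule the_equality)
  fix h'
  assume "\<forall>f. ip (L f) y = ip f h'"
  then have "ip (h' - h) (h' - h) = 0"
    using assms by (simp add: ip_diff_right)
  then show "h' = h"
    by (simp add: ip_self_eq_0_iff)
qed (use assms in simp)

lemma ip_adj:
  assumes "cblin cs L"
  shows "ip (L f) y = ip f (adj ip L y)"
  using adj_exists[OF assms, of y] adj_eqI by metis

lemma linear_adj:
  assumes "cblin cs L"
  shows "linear (adj ip L)"
  by (rule linearI; rule adj_eqI) (simp_all add: ip_add_right ip_scaleR_right ip_adj[OF assms])

lemma adj_cs:
  assumes "cblin cs L"
  shows "adj ip L (cs a y) = cs a (adj ip L y)"
  by (rule adj_eqI) (simp add: ip_cs_right ip_adj[OF assms])

lemma adj_comp_clinear: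
  assumes "cblin cs L" "cblin cs M"
  shows "linear (\<lambda>f. adj ip L (M f))" "adj ip L (M (cs a f)) = cs a (adj ip L (M f))"
  using linear_compose[OF bounded_linear.linear linear_adj[OF assms(1)], of M] assms
  by (simp_all add: cblin_def adj_cs o_def)

lemma clinear_on_has_sum:
  assumes T: "\<And>j. j \<in> J \<Longrightarrow> linear (T j)" "\<And>j a f. j \<in> J \<Longrightarrow> T j (cs a f) = cs a (T j f)"
    and S: "closed_csubspace cs S" and U: "\<And>f. f \<in> S \<Longrightarrow> ((\<lambda>j. T j f) has_sum U f) J"
  shows "clinear_on cs S U"
  unfolding clinear_on_def
proof (intro conjI ballI allI)
  fix f g
  assume "f \<in> S" "g \<in> S"
  have "((\<lambda>j. T j (f + g)) has_sum U f + U g) J"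
    using has_sum_add[OF U[OF \<open>f \<in> S\<close>] U[OF \<open>g \<in> S\<close>]]
    by (rule has_sum_cong[THEN iffD1, rotated]) (simp add: T(1) linear_add)
  then show "U (f + g) = U f + U g"
    using U S \<open>f \<in> S\<close> \<open>g \<in> S\<close> has_sum_unique by (metis closed_csubspace_def)
next
  fix f a
  assume "f \<in> S"
  have "((\<lambda>j. T j (cs a f)) has_sum cs a (U f)) J"
    using has_sum_bounded_linear[OF bounded_linear_cs U[OF \<open>f \<in> S\<close>]]
    by (rule has_sum_cong[THEN iffD1, rotated]) (simp add: T(2))
  then show "U (cs a f) = cs a (U f)"
    using U S \<open>f \<in> S\<close> has_sum_unique by (metis closed_csubspace_def)
qed

lemma near_identity_invertible:
  assumes "closed_csubspace cs R" "U ` R \<subseteq> R" "clinear_on cs R U"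
    and "c < 1" "\<And>f. f \<in> R \<Longrightarrow> norm (f - U f) \<le> c * norm f"
  shows "bij_betw U R R" "clinear_on cs R (inv_into R U)"
proof -
  show "bij_betw U R R"
    using assms closed_csubspace_imp_subspace[OF assms(1)]
    by (intro near_identity_bij_betw) (auto simp: closed_csubspace_def clinear_on_def complete_eq_closed)
  then show "clinear_on cs R (inv_into R U)"
    using assms(1,3) by (rule clinear_on_inv_into)
qed

end

theorem mainTheorem5:
  fixes cs :: "complex \<Rightarrow> 'a::{real_normed_vector,complete_space} \<Rightarrow> 'a"
    and ip :: "'a \<Rightarrow> 'a \<Rightarrow> complex"
    and J :: "int set"
    and Hs :: "int \<Rightarrow> 'a set"
    and K :: "'a \<Rightarrow> 'a"
    and Lam Theta :: "int \<Rightarrow> 'a \<Rightarrow> 'a"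
    and U :: "'a \<Rightarrow> 'a"
  assumes hilb: "complex_hilbert cs ip"
    and sep: "separable_space (euclidean :: 'a topology)"
    and Hs: "\<And>j. j \<in> J \<Longrightarrow> closed_csubspace cs (Hs j)"
    and K: "cblin cs K" and K_closed: "closed (range K)"
    and Lam: "\<And>j. j \<in> J \<Longrightarrow> cblin cs (Lam j) \<and> range (Lam j) \<subseteq> Hs j"
    and Theta: "\<And>j. j \<in> J \<Longrightarrow> cblin cs (Theta j) \<and> range (Theta j) \<subseteq> Hs j"
    and Lam_bessel: "g_bessel_on UNIV J Lam"
    and Theta_bessel: "g_bessel_on UNIV J Theta"
    and U_def: "\<And>f. f \<in> range K \<Longrightarrow> U f = (\<Sum>\<^sub>\<infinity>j\<in>J. adj ip (Lam j) (Theta j f))"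
    and U_maps: "\<And>f. f \<in> range K \<Longrightarrow> U f \<in> range K"
    and approx: "opnorm_on_less (range K) (\<lambda>f. f - U f) 1"
  shows "\<exists>V. (\<forall>f\<in>range K. V f \<in> range K \<and> V (U f) = f \<and> U (V f) = f)
           \<and> (\<forall>f\<in>range K. \<forall>g\<in>range K. V (f + g) = V f + V g)
           \<and> (\<forall>a. \<forall>f\<in>range K. V (cs a f) = cs a (V f))
           \<and> (\<exists>C. \<forall>f\<in>range K. norm (V f) \<le> C * norm f)
           \<and> g_bessel_on (range K) J (\<lambda>j f. Theta j (V f))
           \<and> (\<forall>f\<in>range K. ((\<lambda>j. adj ip (Lam j) (Theta j (V f))) has_sum f) J)"
proof -
  interpret complex_hilbert_space cs ip
    by (rule complex_hilbert_space.intro) (rule hilb)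
  define R where "R = range K"
  define T where "T j f = adj ip (Lam j) (Theta j f)" for j f
  have R: "closed_csubspace cs R"
    using cblin_range_closed_csubspace[OF K K_closed] by (simp add: R_def)
  obtain c where "c < 1" and near: "\<And>f. f \<in> R \<Longrightarrow> norm (f - U f) \<le> c * norm f"
    using approx by (auto simp: opnorm_on_less_def R_def)
  have T: "linear (T j)" "T j (cs a f) = cs a (T j f)" if "j \<in> J" for j a f
    using adj_comp_clinear[of "Lam j" "Theta j"] Lam[OF that] Theta[OF that]
    by (simp_all add: T_def[abs_def])
  have U: "((\<lambda>j. T j f) has_sum U f) J" if "f \<in> R" for f
    using that by (intro near_identity_has_sum[OF _ near \<open>c < 1\<close>] linear_0[OF T(1)])
      (auto simp: U_def R_def T_def)
  have "clinear_on cs R U"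
    using T R U by (rule clinear_on_has_sum)
  then have bij: "bij_betw U R R" and "clinear_on cs R (inv_into R U)"
    using near_identity_invertible[OF R _ _ \<open>c < 1\<close> near] U_maps by (auto simp: R_def)
  moreover have inv: "inv_into R U f \<in> R" "U (inv_into R U f) = f" "inv_into R U (U f) = f"
    if "f \<in> R" for f
    using bij that by (auto simp: bij_betw_inv_into_left bij_betw_inv_into_right
        intro: bij_betw_apply[OF bij_betw_inv_into])
  moreover note bound = near_identity_inv_into_bound[OF bij \<open>c < 1\<close> near]
  moreover have "g_bessel_on R J (\<lambda>j f. Theta j (inv_into R U f))"
    using g_bessel_on_compose[OF Theta_bessel _ bound] by simp
  moreover have "((\<lambda>j. adj ip (Lam j) (Theta j (inv_into R U f))) has_sum f) J" if "f \<in> R" for f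
    using U[OF inv(1)[OF that]] inv(2)[OF that] by (simp add: T_def)
  ultimately show ?thesis
    unfolding R_def[symmetric] clinear_on_def by (intro exI[of _ "inv_into R U"]) blast
qed

end
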